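(* Let $H,K$ be finite dimensional complex Hilbert spaces and let $\phi:\mathcal B(K)\to\mathcal B(H)$ be an arbitrary UCP map. Let $\mathcal S_\phi$ be the set of all states $\rho$ of $\mathcal B(K\otimes H)$ of the form $\rho(a\otimes b)=\langle(\phi(a)\otimes b)\xi,\xi\rangle$ ($a\in\mathcal B(K)$, $b\in\mathcal B(H)$), where $\xi$ ranges over the marginally cyclic unit vectors in $H\otimes H$. If $\mathcal S_\phi$ contains a single entangled state, then every state of $\mathcal S_\phi$ is entangled and $\phi$ preserves entanglement. Otherwise, $\phi$ is entanglement breaking.
   Context: A state of $\mathcal B(K\otimes H)$ is separable if it is a convex combination of product states $a\otimes b\mapsto\sigma(a)\tau(b)$ with $\sigma,\tau$ states of $\mathcal B(K)$, $\mathcal B(H)$; otherwise it is entangled. A unit vector $\xi\in H\otimes H$ is marginally cyclic if $(\mathcal B(H)\otimes\mathbf 1)\xi=H\otimes H$, equivalently if $(\mathbf 1\otimes b)\xi=0$ implies $b=0$ for $b\in\mathcal B(H)$. A UCP map $\phi:\mathcal B(K)\to\mathcal B(H)$ preserves entanglement if for every marginally cyclic unit vector $\xi\in H\otimes H$ the state $a\otimes b\mapsto\langle(\phi(a)\otimes b)\xi,\xi\rangle$ of $\mathcal B(K\otimes H)$ is entangled. $\phi$ is entanglement breaking if for every state $\rho$ of $\mathcal B(H\otimes H)$ the state $\rho\circ(\phi\otimes\mathrm{id}_{\mathcal B(H)})$ of $\mathcal B(K\otimes H)$ is separable, where $\phi\otimes\mathrm{id}$ is the UCP map sending $a\otimes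 b$ to $\phi(a)\otimes b$. *)

theory Defs
  imports "Jordan_Normal_Form.Matrix"
begin

text \<open>A finite dimensional complex Hilbert space of dimension d is
  modelled as complex column vectors of length d; B(C^d) is the set of d x d complex
  matrices (carrier_mat d d).  K = C^m, H = C^n.  Tensor products are realised via the
  Kronecker product with index (i1,i2) encoded as i1 * d2 + i2 (first factor major).
  The inner product is linear in the first argument.\<close>

definition mat_adj :: "complex mat \<Rightarrow> complex mat" where
  "mat_adj A = mat (dim_col A) (dim_row A) (\<lambda>(i,j). cnj (A $$ (j,i)))"

definition vinner :: "complex vec \<Rightarrow> complex vec \<Rightarrow> complex" where
  "vinner x y = (\<Sum>i<dim_vec x. x $ i * cnj (y $ i))"

definition unit_vec_c :: "nat \<Rightarrow> complex vec \<Rightarrow> bool" where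
  "unit_vec_c d x \<longleftrightarrow> x \<in> carrier_vec d \<and> vinner x x = 1"

definition psd :: "nat \<Rightarrow> complex mat \<Rightarrow> bool" where
  "psd d A \<longleftrightarrow> A \<in> carrier_mat d d \<and> (\<exists>B \<in> carrier_mat d d. A = mat_adj B * B)"

definition kron :: "complex mat \<Rightarrow> complex mat \<Rightarrow> complex mat" where
  "kron A B = mat (dim_row A * dim_row B) (dim_col A * dim_col B)
     (\<lambda>(i,j). A $$ (i div dim_row B, j div dim_col B) * B $$ (i mod dim_row B, j mod dim_col B))"

definition is_state :: "nat \<Rightarrow> (complex mat \<Rightarrow> complex) \<Rightarrow> bool" where
  "is_state d \<omega> \<longleftrightarrow>
     (\<forall>A \<in> carrier_mat d d. \<forall>B \<in> carrier_mat d d. \<omega> (A + B) = \<omega> A + \<omega> B) \<and>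
     (\<forall>c. \<forall>A \<in> carrier_mat d d. \<omega> (c \<cdot>\<^sub>m A) = c * \<omega> A) \<and>
     (\<forall>A. psd d A \<longrightarrow> \<omega> A \<in> \<real> \<and> 0 \<le> Re (\<omega> A)) \<and>
     \<omega> (1\<^sub>m d) = 1"

definition product_state :: "nat \<Rightarrow> nat \<Rightarrow> (complex mat \<Rightarrow> complex) \<Rightarrow> bool" where
  "product_state m n \<omega> \<longleftrightarrow> is_state (m * n) \<omega> \<and>
     (\<exists>\<sigma> \<tau>. is_state m \<sigma> \<and> is_state n \<tau> \<and>
        (\<forall>a \<in> carrier_mat m m. \<forall>b \<in> carrier_mat n n. \<omega> (kron a b) = \<sigma> a * \<tau> b))"

definition separable :: "nat \<Rightarrow> nat \<Rightarrow> (complex mat \<Rightarrow> complex) \<Rightarrow> bool" where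
  "separable m n \<omega> \<longleftrightarrow> is_state (m * n) \<omega> \<and>
     (\<exists>(k::nat) (p::nat \<Rightarrow> real) (\<omega>s::nat \<Rightarrow> complex mat \<Rightarrow> complex).
        (\<forall>i<k. 0 \<le> p i \<and> product_state m n (\<omega>s i)) \<and> (\<Sum>i<k. p i) = 1 \<and>
        (\<forall>X \<in> carrier_mat (m*n) (m*n). \<omega> X = (\<Sum>i<k. complex_of_real (p i) * \<omega>s i X)))"

definition entangled :: "nat \<Rightarrow> nat \<Rightarrow> (complex mat \<Rightarrow> complex) \<Rightarrow> bool" where
  "entangled m n \<omega> \<longleftrightarrow> is_state (m * n) \<omega> \<and> \<not> separable m n \<omega>"

text \<open>The ampliation \<phi> \<otimes> id_{B(C^k)} : B(C^m \<otimes> C^k) \<rightarrow> B(C^n \<otimes> C^k), applying \<phi>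
  blockwise; it sends kron a b to kron (\<phi> a) b.\<close>
definition tensor_id :: "(complex mat \<Rightarrow> complex mat) \<Rightarrow> nat \<Rightarrow> nat \<Rightarrow> nat \<Rightarrow> complex mat \<Rightarrow> complex mat" where
  "tensor_id \<phi> m n k X = mat (n * k) (n * k)
     (\<lambda>(i,j). (\<phi> (mat m m (\<lambda>(a,a'). X $$ (a * k + i mod k, a' * k + j mod k)))) $$ (i div k, j div k))"

definition UCP :: "nat \<Rightarrow> nat \<Rightarrow> (complex mat \<Rightarrow> complex mat) \<Rightarrow> bool" where
  "UCP m n \<phi> \<longleftrightarrow>
     (\<forall>A \<in> carrier_mat m m. \<phi> A \<in> carrier_mat n n) \<and>
     (\<forall>A \<in> carrier_mat m m. \<forall>B \<in> carrier_mat m m. \<phi> (A + B) = \<phi> A + \<phi> B) \<and>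
     (\<forall>c. \<forall>A \<in> carrier_mat m m. \<phi> (c \<cdot>\<^sub>m A) = c \<cdot>\<^sub>m \<phi> A) \<and>
     \<phi> (1\<^sub>m m) = 1\<^sub>m n \<and>
     (\<forall>k X. psd (m * k) X \<longrightarrow> psd (n * k) (tensor_id \<phi> m n k X))"

definition marginally_cyclic :: "nat \<Rightarrow> complex vec \<Rightarrow> bool" where
  "marginally_cyclic n \<xi> \<longleftrightarrow> \<xi> \<in> carrier_vec (n * n) \<and>
     (\<forall>b \<in> carrier_mat n n. kron (1\<^sub>m n) b *\<^sub>v \<xi> = 0\<^sub>v (n * n) \<longrightarrow> b = 0\<^sub>m n n)"

definition vstate :: "(complex mat \<Rightarrow> complex mat) \<Rightarrow> nat \<Rightarrow> nat \<Rightarrow> complex vec \<Rightarrow> complex mat \<Rightarrow> complex" where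
  "vstate \<phi> m n \<xi> = (\<lambda>X. vinner (tensor_id \<phi> m n n X *\<^sub>v \<xi>) \<xi>)"

definition S_phi :: "(complex mat \<Rightarrow> complex mat) \<Rightarrow> nat \<Rightarrow> nat \<Rightarrow> (complex mat \<Rightarrow> complex) set" where
  "S_phi \<phi> m n = {vstate \<phi> m n \<xi> | \<xi>. unit_vec_c (n * n) \<xi> \<and> marginally_cyclic n \<xi>}"

definition preserves_entanglement :: "nat \<Rightarrow> nat \<Rightarrow> (complex mat \<Rightarrow> complex mat) \<Rightarrow> bool" where
  "preserves_entanglement m n \<phi> \<longleftrightarrow>
     (\<forall>\<xi>. unit_vec_c (n * n) \<xi> \<and> marginally_cyclic n \<xi> \<longrightarrow> entangled m n (vstate \<phi> m n \<xi>))"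

definition entanglement_breaking :: "nat \<Rightarrow> nat \<Rightarrow> (complex mat \<Rightarrow> complex mat) \<Rightarrow> bool" where
  "entanglement_breaking m n \<phi> \<longleftrightarrow>
     (\<forall>\<rho>. is_state (n * n) \<rho> \<longrightarrow> separable m n (\<rho> \<circ> tensor_id \<phi> m n n))"

end

theory Submission
  imports Defs "Jordan_Normal_Form.Determinant"
begin

text \<open>Suppose some \<xi> \<in> S_\<phi> gives a separable state \<Sum>_i p_i \<sigma>_i \<otimes> \<tau>_i. Since \<xi> is marginally
  cyclic, its coefficient matrix C (with \<xi> = \<Sum> C_{jl} e_j \<otimes> e_l) is invertible, and evaluating
  the state on a \<otimes> b for suitable b built from C^{-1} recovers the entries of \<phi>(a):
  \<phi>(a) = \<Sum>_i p_i \<sigma>_i(a) T_i with positive T_i (Holevo form). For such \<phi> and any state \<rho>,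
  \<rho> \<circ> (\<phi> \<otimes> id) sends a \<otimes> b to \<Sum>_i p_i \<sigma>_i(a) \<rho>(T_i \<otimes> b); writing every state as a sum of
  vector functionals turns this into a convex combination of product states. So \<phi> is
  entanglement breaking, and then every member of S_\<phi> is separable. Hence a single entangled
  member forces all of them to be entangled; otherwise, as S_\<phi> is nonempty (it contains the
  maximally entangled vector), \<phi> is entanglement breaking.\<close>

section \<open>Gram decomposition of positive semidefinite forms\<close>

definition quad_form :: "nat \<Rightarrow> (nat \<Rightarrow> nat \<Rightarrow> complex) \<Rightarrow> (nat \<Rightarrow> complex) \<Rightarrow> complex" where
  "quad_form d Q x = (\<Sum>p<d. \<Sum>q<d. x p * cnj (x q) * Q p q)"

definition psd_form :: "nat \<Rightarrow> (nat \<Rightarrow> nat \<Rightarrow> complex) \<Rightarrow> bool" where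
  "psd_form d Q \<longleftrightarrow> (\<forall>x. quad_form d Q x \<in> \<real> \<and> 0 \<le> Re (quad_form d Q x))"

lemma if_zero_distrib:
  "(if b then t else 0) * y = (if b then t * y else (0::complex))"
  "y * (if b then t else 0) = (if b then y * t else (0::complex))"
  "cnj (if b then t else 0) = (if b then cnj t else 0)"
  by auto

lemma sum_if_const: "(\<Sum>q\<in>A. if P then f q else (0::complex)) = (if P then (\<Sum>q\<in>A. f q) else 0)"
  by auto

lemma quad_form_single:
  assumes "q < d"
  shows "quad_form d Q (\<lambda>p. if p = q then a else 0) = a * cnj a * Q q q"
  using assms by (simp add: quad_form_def if_zero_distrib sum.delta)

lemma quad_form_pair:
  assumes "q < d" "k < d" "q \<noteq> k"
  shows "quad_form d Q (\<lambda>p. (if p = q then a else 0) + (if p = k then b else 0)) =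
     a * cnj a * Q q q + a * cnj b * Q q k + b * cnj a * Q k q + b * cnj b * Q k k"
proof -
  have e: "\<And>A1 A2 B1 B2 (R::complex). (A1 + A2) * cnj (B1 + B2) * R =
      A1 * cnj B1 * R + A1 * cnj B2 * R + A2 * cnj B1 * R + A2 * cnj B2 * R"
    by (simp add: algebra_simps)
  show ?thesis
    using assms unfolding quad_form_def e sum.distrib by (simp add: if_zero_distrib sum.delta)
qed

lemma quad_form_shift:
  assumes "k < d"
  shows "quad_form d Q (\<lambda>p. x p - (if p = k then t else 0)) =
    quad_form d Q x - cnj t * (\<Sum>p<d. x p * Q p k) - t * (\<Sum>q<d. cnj (x q) * Q k q) + t * cnj t * Q k k"
proof -
  have e: "\<And>A1 A2 B1 B2 (R::complex). (A1 - A2) * cnj (B1 - B2) * R =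
      A1 * cnj B1 * R - A1 * cnj B2 * R - A2 * cnj B1 * R + A2 * cnj B2 * R"
    by (simp add: algebra_simps)
  show ?thesis
    using assms unfolding quad_form_def e sum.distrib sum_subtractf
    by (simp add: if_zero_distrib sum.delta sum_if_const sum_distrib_left algebra_simps)
qed

lemma psd_form_diag:
  assumes "psd_form d Q" "k < d"
  shows "Q k k \<in> \<real>" "0 \<le> Re (Q k k)"
  using assms quad_form_single[OF assms(2), of Q 1] unfolding psd_form_def by (metis mult_1 complex_cnj_one)+

lemma psd_form_hermitian:
  assumes ps: "psd_form d Q" and p: "p < d" and q: "q < d"
  shows "Q q p = cnj (Q p q)"
proof (cases "p = q")
  case True
  then show ?thesis using psd_form_diag(1)[OF ps p] by (simp add: Reals_cnj_iff)
next
  case False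
  have real: "Im (quad_form d Q x) = 0" for x
    using ps unfolding psd_form_def complex_is_Real_iff by blast
  have "Im (Q p p) = 0" "Im (Q q q) = 0"
    using psd_form_diag(1)[OF ps p] psd_form_diag(1)[OF ps q] by (simp_all add: complex_is_Real_iff)
  moreover have "Im (Q p p + Q p q + Q q p + Q q q) = 0"
    using real[of "\<lambda>r. (if r = p then 1 else 0) + (if r = q then 1 else 0)"]
    by (simp only: quad_form_pair[OF p q False, of Q 1 1]) simp
  moreover have "Im (Q p p - \<i> * Q p q + \<i> * Q q p + Q q q) = 0"
    using real[of "\<lambda>r. (if r = p then 1 else 0) + (if r = q then \<i> else 0)"]
    by (simp only: quad_form_pair[OF p q False, of Q 1 \<i>]) simp
  ultimately show ?thesis by (simp add: complex_eq_iff)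
qed

lemma psd_form_zero_pivot:
  assumes ps: "psd_form d Q" and k: "k < d" and q: "q < d" and pivot: "Q k k = 0"
  shows "Q k q = 0"
proof (rule ccontr)
  assume nz: "Q k q \<noteq> 0"
  then have qk: "q \<noteq> k" using pivot by auto
  define z where "z = Q k q"
  have zp: "cmod z ^ 2 > 0" using nz by (simp add: z_def)
  \<comment> \<open>moving far enough along the null direction e_k makes the form negative\<close>
  define c where "c = (\<bar>Re (Q q q)\<bar> + 1) / (2 * cmod z ^ 2)"
  define s where "s = - complex_of_real c * cnj z"
  have "quad_form d Q (\<lambda>p. (if p = q then 1 else 0) + (if p = k then s else 0)) =
      Q q q + cnj s * Q q k + s * Q k q + s * cnj s * Q k k"
    using quad_form_pair[OF q k qk, of Q 1 s] by simp
  also have "\<dots> = Q q q - 2 * complex_of_real c * (z * cnj z)"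
    using psd_form_hermitian[OF ps k q] pivot unfolding s_def z_def by (simp add: algebra_simps)
  also have "\<dots> = Q q q - complex_of_real (2 * c * cmod z ^ 2)"
    by (simp add: complex_norm_square[symmetric])
  finally have "0 \<le> Re (Q q q - complex_of_real (2 * c * cmod z ^ 2))"
    using ps unfolding psd_form_def by metis
  moreover have "2 * c * cmod z ^ 2 = \<bar>Re (Q q q)\<bar> + 1" using zp unfolding c_def by simp
  ultimately show False by simp
qed

lemma psd_form_positive_pivot:
  assumes ps: "psd_form d Q" and k: "k < d" and pos: "0 < Re (Q k k)"
  defines "v \<equiv> \<lambda>q. Q k q / complex_of_real (sqrt (Re (Q k k)))"
  shows "psd_form d (\<lambda>p q. Q p q - cnj (v p) * v q)"
    and "\<forall>q<d. Q k q = cnj (v k) * v q \<and> Q q k = cnj (v q) * v k"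
proof -
  define \<alpha> where "\<alpha> = Q k k"
  define s where "s = complex_of_real (sqrt (Re \<alpha>))"
  have s0: "s \<noteq> 0" and cs: "cnj s = s" using pos by (simp_all add: s_def \<alpha>_def)
  have ss: "s * s = \<alpha>"
    using psd_form_diag[OF ps k] unfolding s_def \<alpha>_def
    by (simp flip: of_real_mult add: complex_is_Real_iff complex_eq_iff)
  have herm: "Q q k = cnj (Q k q)" if "q < d" for q by (rule psd_form_hermitian[OF ps k that])
  have v: "v = (\<lambda>q. Q k q / s)" unfolding v_def s_def \<alpha>_def ..
  have vk: "v k = s" using ss s0 unfolding v \<alpha>_def by (metis nonzero_mult_div_cancel_right)
  show "\<forall>q<d. Q k q = cnj (v k) * v q \<and> Q q k = cnj (v q) * v k"
    using s0 herm unfolding vk cs by (simp add: v cs)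
  show "psd_form d (\<lambda>p q. Q p q - cnj (v p) * v q)"
    unfolding psd_form_def
  proof
    fix x
    define \<beta> where "\<beta> = (\<Sum>p<d. x p * cnj (v p))"
    have cb: "cnj \<beta> = (\<Sum>q<d. cnj (x q) * v q)" by (simp add: \<beta>_def)
    have "quad_form d (\<lambda>p q. Q p q - cnj (v p) * v q) x = quad_form d Q x - \<beta> * cnj \<beta>"
    proof -
      have "\<beta> * cnj \<beta> = (\<Sum>p<d. \<Sum>q<d. x p * cnj (x q) * (cnj (v p) * v q))"
        unfolding cb unfolding \<beta>_def sum_product by (intro sum.cong refl) (simp add: algebra_simps)
      then show ?thesis by (simp add: quad_form_def right_diff_distrib sum_subtractf)
    qed
    \<comment> \<open>completing the square: shifting x along e_k by \<beta>/s absorbs the rank-one term\<close>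
    also have "\<dots> = quad_form d Q (\<lambda>p. x p - (if p = k then \<beta> / s else 0))"
    proof -
      have "(\<Sum>p<d. x p * Q p k) = s * \<beta>"
        unfolding \<beta>_def sum_distrib_left by (intro sum.cong refl) (use s0 herm cs in \<open>simp add: v\<close>)
      moreover have "(\<Sum>q<d. cnj (x q) * Q k q) = s * cnj \<beta>"
        unfolding cb sum_distrib_left by (intro sum.cong refl) (use s0 in \<open>simp add: v\<close>)
      ultimately show ?thesis
        unfolding quad_form_shift[OF k] \<alpha>_def[symmetric] ss[symmetric] using s0 cs by (simp add: field_simps)
    qed
    finally show "quad_form d (\<lambda>p q. Q p q - cnj (v p) * v q) x \<in> \<real> \<and>
        0 \<le> Re (quad_form d (\<lambda>p q. Q p q - cnj (v p) * v q) x)"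
      using ps unfolding psd_form_def by presburger
  qed
qed

lemma psd_form_split_row:
  assumes ps: "psd_form d Q" and k: "k < d"
  obtains v where "psd_form d (\<lambda>p q. Q p q - cnj (v p) * v q)"
    and "\<forall>q<d. Q k q = cnj (v k) * v q \<and> Q q k = cnj (v q) * v k"
proof (cases "0 < Re (Q k k)")
  case True
  show ?thesis using psd_form_positive_pivot[OF ps k True] by (rule that)
next
  case False
  then have "Q k k = 0"
    using psd_form_diag[OF ps k] by (simp add: complex_is_Real_iff complex_eq_iff)
  then have "\<forall>q<d. Q k q = 0 \<and> Q q k = 0"
    using psd_form_zero_pivot[OF ps k] psd_form_hermitian[OF ps k] by fastforce
  then show ?thesis using that[of "\<lambda>_. 0"] ps by simp
qed

lemma psd_form_gram:
  "psd_form d Q \<Longrightarrow> \<exists>u. \<forall>p<d. \<forall>q<d. Q p q = (\<Sum>t<d. cnj (u t p) * u t q)"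
proof (induction d arbitrary: Q)
  case 0
  then show ?case by simp
next
  case (Suc d)
  obtain v where v: "psd_form (Suc d) (\<lambda>p q. Q p q - cnj (v p) * v q)"
    and row: "\<forall>q<Suc d. Q d q = cnj (v d) * v q \<and> Q q d = cnj (v q) * v d"
    using psd_form_split_row[OF Suc.prems] by blast
  define Q' where "Q' = (\<lambda>p q. Q p q - cnj (v p) * v q)"
  have "quad_form d Q' x = quad_form (Suc d) Q' x" for x
    unfolding quad_form_def using row by (simp add: Q'_def)
  then have "psd_form d Q'" using v unfolding psd_form_def Q'_def by presburger
  then obtain u' where u': "\<forall>p<d. \<forall>q<d. Q' p q = (\<Sum>t<d. cnj (u' t p) * u' t q)"
    using Suc.IH by blast
  define u where "u = (\<lambda>t. if t < d then (\<lambda>p. if p < d then u' t p else 0) else v)"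
  show ?case
  proof (intro exI allI impI)
    fix p q assume p: "p < Suc d" and q: "q < Suc d"
    have "(\<Sum>t<Suc d. cnj (u t p) * u t q) = (\<Sum>t<d. cnj (u t p) * u t q) + cnj (v p) * v q"
      by (simp add: u_def)
    also have "(\<Sum>t<d. cnj (u t p) * u t q) = (if p < d \<and> q < d then Q' p q else 0)"
      using u' by (cases "p < d"; cases "q < d") (simp_all add: u_def)
    finally show "Q p q = (\<Sum>t<Suc d. cnj (u t p) * u t q)"
      using row p q by (auto simp: Q'_def less_Suc_eq)
  qed
qed

section \<open>Linear functionals on matrices and vector functionals\<close>

definition mat_unit :: "nat \<Rightarrow> nat \<Rightarrow> nat \<Rightarrow> complex mat" where
  "mat_unit d p q = mat d d (\<lambda>(i,j). if i = p \<and> j = q then 1 else 0)"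

definition mat_restrict :: "nat \<Rightarrow> (nat \<times> nat) set \<Rightarrow> complex mat \<Rightarrow> complex mat" where
  "mat_restrict d S A = mat d d (\<lambda>(i,j). if (i,j) \<in> S then A $$ (i,j) else 0)"

definition linear_functional :: "nat \<Rightarrow> (complex mat \<Rightarrow> complex) \<Rightarrow> bool" where
  "linear_functional d f \<longleftrightarrow>
     (\<forall>A \<in> carrier_mat d d. \<forall>B \<in> carrier_mat d d. f (A + B) = f A + f B) \<and>
     (\<forall>c. \<forall>A \<in> carrier_mat d d. f (c \<cdot>\<^sub>m A) = c * f A)"

definition vector_functional :: "nat \<Rightarrow> (nat \<Rightarrow> complex) \<Rightarrow> complex mat \<Rightarrow> complex" where
  "vector_functional d g A = (\<Sum>p<d. \<Sum>q<d. A $$ (p,q) * cnj (g p) * g q)"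

lemma mat_unit_carrier [simp]: "mat_unit d p q \<in> carrier_mat d d"
  by (simp add: mat_unit_def)

lemma mat_restrict_carrier [simp]: "mat_restrict d S A \<in> carrier_mat d d"
  by (simp add: mat_restrict_def)

lemma linear_functional_zero:
  assumes "linear_functional d f"
  shows "f (0\<^sub>m d d) = 0"
proof -
  have "f (0 \<cdot>\<^sub>m 1\<^sub>m d) = 0 * f (1\<^sub>m d)"
    using assms one_carrier_mat unfolding linear_functional_def by blast
  moreover have "0 \<cdot>\<^sub>m 1\<^sub>m d = (0\<^sub>m d d :: complex mat)" by auto
  ultimately show ?thesis by simp
qed

lemma linear_functional_expand_partial:
  assumes lf: "linear_functional d f" and A: "A \<in> carrier_mat d d"
    and S: "finite S" "S \<subseteq> {..<d} \<times> {..<d}"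
  shows "f A = (\<Sum>x\<in>S. A $$ x * f (mat_unit d (fst x) (snd x)))
              + f (mat_restrict d ({..<d} \<times> {..<d} - S) A)"
  using S
proof (induction S rule: finite_induct)
  case empty
  have "mat_restrict d ({..<d} \<times> {..<d}) A = A" using A by (auto simp: mat_restrict_def)
  then show ?case by simp
next
  case (insert x S)
  obtain p q where x: "x = (p,q)" by (cases x)
  have pq: "p < d" "q < d" using insert x by auto
  have "mat_restrict d ({..<d} \<times> {..<d} - S) A =
      mat_restrict d ({..<d} \<times> {..<d} - insert x S) A + A $$ (p,q) \<cdot>\<^sub>m mat_unit d p q"
    using pq insert(2) x by (auto simp: mat_restrict_def mat_unit_def)
  then have "f (mat_restrict d ({..<d} \<times> {..<d} - S) A) =
      f (mat_restrict d ({..<d} \<times> {..<d} - insert x S) A) + A $$ (p,q) * f (mat_unit d p q)"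
    using lf unfolding linear_functional_def by simp
  then show ?case using insert x by (simp add: algebra_simps)
qed

lemma linear_functional_expand:
  assumes lf: "linear_functional d f" and A: "A \<in> carrier_mat d d"
  shows "f A = (\<Sum>p<d. \<Sum>q<d. A $$ (p,q) * f (mat_unit d p q))"
proof -
  have "mat_restrict d {} A = 0\<^sub>m d d" by (auto simp: mat_restrict_def)
  then have "f A = (\<Sum>x\<in>{..<d} \<times> {..<d}. A $$ x * f (mat_unit d (fst x) (snd x)))"
    using linear_functional_expand_partial[OF lf A, of "{..<d} \<times> {..<d}"] linear_functional_zero[OF lf]
    by simp
  then show ?thesis by (simp add: sum.cartesian_product case_prod_beta)
qed

lemma is_state_linear_functional: "is_state d f \<Longrightarrow> linear_functional d f"
  unfolding is_state_def linear_functional_def by blast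

lemma is_state_cong:
  assumes fg: "\<forall>X\<in>carrier_mat d d. f X = g X" and st: "is_state d f"
  shows "is_state d g"
proof -
  have "psd d A \<Longrightarrow> g A = f A" for A using fg unfolding psd_def by simp
  then show ?thesis
    using st fg unfolding is_state_def by (metis add_carrier_mat smult_carrier_mat one_carrier_mat)
qed

lemma psd_outer_product: "psd d (mat d d (\<lambda>(p,q). x p * cnj (x q)))"
proof (cases "d = 0")
  case True
  then show ?thesis unfolding psd_def by (auto intro!: bexI[of _ "0\<^sub>m 0 0"] eq_matI simp: mat_adj_def)
next
  case False
  define B where "B = mat d d (\<lambda>(i,j). if i = 0 then cnj (x j) else 0)"
  have eq: "mat d d (\<lambda>(p,q). x p * cnj (x q)) = mat_adj B * B"
  proof (rule eq_matI)
    fix i j assume "i < dim_row (mat_adj B * B)" "j < dim_col (mat_adj B * B)"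
    then have i: "i < d" and j: "j < d" by (auto simp: mat_adj_def B_def)
    have "(mat_adj B * B) $$ (i,j) = (\<Sum>k<d. cnj (B $$ (k,i)) * B $$ (k,j))"
      using i j by (simp add: mat_adj_def B_def scalar_prod_def lessThan_atLeast0)
    also have "\<dots> = (\<Sum>k<d. if k = 0 then x i * cnj (x j) else 0)"
      using i j by (intro sum.cong) (auto simp: B_def)
    finally show "mat d d (\<lambda>(p,q). x p * cnj (x q)) $$ (i,j) = (mat_adj B * B) $$ (i,j)"
      using i j False by simp
  qed (auto simp: mat_adj_def B_def)
  show ?thesis unfolding psd_def by (intro conjI bexI[of _ B] mat_carrier eq) (simp add: B_def)
qed

lemma state_psd_form:
  assumes "is_state d f"
  shows "psd_form d (\<lambda>p q. f (mat_unit d p q))"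
  unfolding psd_form_def
proof
  fix x
  have "quad_form d (\<lambda>p q. f (mat_unit d p q)) x = f (mat d d (\<lambda>(p,q). x p * cnj (x q)))"
    unfolding quad_form_def
    by (subst linear_functional_expand[OF is_state_linear_functional[OF assms]]) (auto simp: mult.assoc)
  then show "quad_form d (\<lambda>p q. f (mat_unit d p q)) x \<in> \<real> \<and> 0 \<le> Re (quad_form d (\<lambda>p q. f (mat_unit d p q)) x)"
    using assms psd_outer_product[of d x] unfolding is_state_def by simp
qed

lemma vector_functional_linear: "linear_functional d (vector_functional d g)"
  unfolding linear_functional_def vector_functional_def
  by (auto simp: sum.distrib sum_distrib_left algebra_simps)

text \<open>Obtained from the Gram decomposition of the values of f on matrix units.\<close>
lemma state_sum_vector_functionals:
  assumes "is_state d f"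
  obtains u where "\<forall>A \<in> carrier_mat d d. f A = (\<Sum>t<d. vector_functional d (u t) A)"
proof -
  obtain u where u: "\<forall>p<d. \<forall>q<d. f (mat_unit d p q) = (\<Sum>t<d. cnj (u t p) * u t q)"
    using psd_form_gram[OF state_psd_form[OF assms]] by blast
  have "f A = (\<Sum>t<d. vector_functional d (u t) A)" if A: "A \<in> carrier_mat d d" for A
  proof -
    have "f A = (\<Sum>p<d. \<Sum>q<d. A $$ (p,q) * (\<Sum>t<d. cnj (u t p) * u t q))"
      using linear_functional_expand[OF is_state_linear_functional[OF assms] A] u by simp
    also have "\<dots> = (\<Sum>t<d. vector_functional d (u t) A)"
      unfolding vector_functional_def sum_distrib_left
      by (subst sum.swap, rule sum.cong[OF refl], subst sum.swap) (simp add: mult.assoc)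
    finally show ?thesis .
  qed
  then show ?thesis using that by blast
qed

lemma vector_functional_adj_mult:
  assumes B: "B \<in> carrier_mat d d"
  shows "vector_functional d g (mat_adj B * B) = complex_of_real (\<Sum>k<d. (cmod (\<Sum>q<d. B $$ (k,q) * g q))^2)"
proof -
  have "vector_functional d g (mat_adj B * B) =
      (\<Sum>p<d. \<Sum>q<d. \<Sum>k<d. cnj (B $$ (k,p)) * B $$ (k,q) * cnj (g p) * g q)"
    unfolding vector_functional_def using B
    by (intro sum.cong refl) (simp add: mat_adj_def scalar_prod_def lessThan_atLeast0 sum_distrib_right)
  also have "\<dots> = (\<Sum>k<d. \<Sum>p<d. \<Sum>q<d. cnj (B $$ (k,p)) * B $$ (k,q) * cnj (g p) * g q)"
    by (subst sum.swap, rule sum.cong[OF refl], rule sum.swap)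
  also have "\<dots> = (\<Sum>k<d. cnj (\<Sum>p<d. B $$ (k,p) * g p) * (\<Sum>q<d. B $$ (k,q) * g q))"
    by (simp add: sum_product cnj_sum mult_ac) (intro sum.cong refl sum.swap)
  also have "\<dots> = complex_of_real (\<Sum>k<d. (cmod (\<Sum>q<d. B $$ (k,q) * g q))^2)"
    by (simp only: of_real_sum complex_norm_square mult.commute)
  finally show ?thesis .
qed

lemma vector_functional_one: "vector_functional d g (1\<^sub>m d) = complex_of_real (\<Sum>p<d. (cmod (g p))^2)"
proof -
  have "vector_functional d g (1\<^sub>m d) = (\<Sum>p<d. cnj (g p) * g p)"
    unfolding vector_functional_def by (simp add: if_zero_distrib sum.delta)
  then show ?thesis
    by (simp only: of_real_sum complex_norm_square mult.commute)
qed

lemma vector_functional_one_nonneg: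
  "vector_functional d g (1\<^sub>m d) \<in> \<real>" "0 \<le> Re (vector_functional d g (1\<^sub>m d))"
  unfolding vector_functional_one by (auto simp: sum_nonneg)

lemma vector_functional_vanishes:
  assumes "vector_functional d g (1\<^sub>m d) = 0"
  shows "vector_functional d g A = 0"
proof -
  have "(\<Sum>p<d. (cmod (g p))^2) = 0"
    using assms unfolding vector_functional_one by (simp only: of_real_eq_0_iff)
  then have "\<forall>p<d. g p = 0" by (simp add: sum_nonneg_eq_0_iff)
  then show ?thesis unfolding vector_functional_def by simp
qed

lemma sum_vector_functionals_state:
  assumes fin: "finite I" and one: "(\<Sum>x\<in>I. vector_functional d (h x) (1\<^sub>m d)) = 1"
  shows "is_state d (\<lambda>A. \<Sum>x\<in>I. vector_functional d (h x) A)"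
proof -
  have "(\<Sum>x\<in>I. vector_functional d (h x) A) \<in> \<real> \<and> 0 \<le> Re (\<Sum>x\<in>I. vector_functional d (h x) A)"
    if "psd d A" for A
  proof -
    obtain B where B: "B \<in> carrier_mat d d" and AB: "A = mat_adj B * B" using \<open>psd d A\<close> unfolding psd_def by auto
    show ?thesis
      unfolding AB vector_functional_adj_mult[OF B] of_real_sum[symmetric] by (simp add: sum_nonneg)
  qed
  then show ?thesis
    using vector_functional_linear one unfolding is_state_def linear_functional_def
    by (simp add: sum.distrib sum_distrib_left)
qed

lemma vector_functional_normalized_state:
  assumes nz: "vector_functional d g (1\<^sub>m d) \<noteq> 0"
  shows "is_state d (\<lambda>A. vector_functional d g A / vector_functional d g (1\<^sub>m d))"
proof -
  define r where "r = Re (vector_functional d g (1\<^sub>m d))"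
  have w: "vector_functional d g (1\<^sub>m d) = complex_of_real r"
    using vector_functional_one_nonneg(1)[of d g] unfolding r_def by (simp add: complex_is_Real_iff complex_eq_iff)
  moreover have "0 \<le> r" using vector_functional_one_nonneg(2)[of d g] unfolding r_def .
  ultimately have r: "0 < r" using nz by force
  define h where "h = (\<lambda>_::unit. \<lambda>p. g p / complex_of_real (sqrt r))"
  have scale: "vector_functional d (h ()) A = vector_functional d g A / complex_of_real r" for A
  proof -
    have "cnj (h () p) * h () q = cnj (g p) * g q / complex_of_real r" for p q
      using r by (simp add: h_def field_simps flip: of_real_mult)
    then show ?thesis by (simp add: vector_functional_def sum_divide_distrib mult.assoc)
  qed
  have "is_state d (\<lambda>A. \<Sum>x\<in>{()}. vector_functional d (h x) A)"
    using r by (intro sum_vector_functionals_state) (simp_all add: scale w)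
  then show ?thesis by (simp add: scale w)
qed

section \<open>Elementary tensors and a separability criterion\<close>

definition prod_vec :: "nat \<Rightarrow> (nat \<Rightarrow> complex) \<Rightarrow> (nat \<Rightarrow> complex) \<Rightarrow> nat \<Rightarrow> complex" where
  "prod_vec n g y = (\<lambda>P. g (P div n) * y (P mod n))"

lemma sum_lessThan_add: "(\<Sum>k<a + n. f k) = (\<Sum>k<(a::nat). f k) + (\<Sum>l<n. f (a + l))"
  by (induction n) (simp_all add: add.assoc)

lemma sum_lessThan_mult:
  fixes F :: "nat \<Rightarrow> 'a::comm_monoid_add"
  shows "(\<Sum>P<m * n. F P) = (\<Sum>a<m. \<Sum>l<n. F (a * n + l))"
proof (induction m)
  case (Suc m)
  have "(\<Sum>P<Suc m * n. F P) = (\<Sum>P<m * n + n. F P)" by (simp add: add.commute)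
  then show ?case unfolding sum_lessThan_add using Suc by simp
qed simp

lemma mult_add_less:
  assumes "x < m" "z < (k::nat)"
  shows "x * k + z < m * k"
proof -
  have "x * k + z < (x + 1) * k" "(x + 1) * k \<le> m * k" using assms by (simp, intro mult_le_mono1, simp)
  then show ?thesis by linarith
qed

lemma less_mult_div_mod:
  assumes "P < m * (n::nat)"
  shows "P div n < m" "P mod n < n"
proof -
  have "0 < n" using assms by (cases n) auto
  then show "P div n < m" "P mod n < n" using assms by (simp_all add: less_mult_imp_div_less)
qed

lemma eq_mult_add_iff:
  assumes "l < (n::nat)"
  shows "i = \<alpha> * n + l \<longleftrightarrow> i div n = \<alpha> \<and> i mod n = l"
  using assms div_mult_mod_eq[of i n] by auto

lemma kron_carrier [simp]:
  "A \<in> carrier_mat m m \<Longrightarrow> B \<in> carrier_mat n n \<Longrightarrow> kron A B \<in> carrier_mat (m * n) (m * n)"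
  unfolding kron_def by simp

lemma kron_entry:
  assumes "A \<in> carrier_mat m m" "B \<in> carrier_mat n n"
    and "\<alpha> < m" "\<alpha>' < m" "l < n" "l' < n"
  shows "kron A B $$ (\<alpha> * n + l, \<alpha>' * n + l') = A $$ (\<alpha>,\<alpha>') * B $$ (l,l')"
  using assms mult_add_less[of \<alpha> m l n] mult_add_less[of \<alpha>' m l' n] unfolding kron_def by simp

lemma kron_one: "kron (1\<^sub>m m) (1\<^sub>m n) = (1\<^sub>m (m * n) :: complex mat)"
proof (rule eq_matI)
  fix i j assume "i < dim_row (1\<^sub>m (m * n) :: complex mat)" "j < dim_col (1\<^sub>m (m * n) :: complex mat)"
  then have i: "i < m * n" and j: "j < m * n" by auto
  then have "i div n < m" "j div n < m" "i mod n < n" "j mod n < n"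
    using less_mult_div_mod by blast+
  moreover have "(i div n = j div n \<and> i mod n = j mod n) = (i = j)"
    by (metis div_mult_mod_eq)
  ultimately show "kron (1\<^sub>m m) (1\<^sub>m n) $$ (i,j) = (1\<^sub>m (m * n) :: complex mat) $$ (i,j)"
    using i j unfolding kron_def by auto
qed (auto simp: kron_def)

lemma mat_unit_kron:
  assumes "\<alpha> < m" "\<alpha>' < m" "l < n" "l' < n"
  shows "mat_unit (m * n) (\<alpha> * n + l) (\<alpha>' * n + l') = kron (mat_unit m \<alpha> \<alpha>') (mat_unit n l l')"
proof (rule eq_matI)
  fix i j assume "i < dim_row (kron (mat_unit m \<alpha> \<alpha>') (mat_unit n l l'))"
    "j < dim_col (kron (mat_unit m \<alpha> \<alpha>') (mat_unit n l l'))"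
  then have i: "i < m * n" and j: "j < m * n" by (auto simp: kron_def mat_unit_def)
  then have "i div n < m" "j div n < m" "i mod n < n" "j mod n < n"
    using less_mult_div_mod by blast+
  moreover have "(i = \<alpha> * n + l) = (i div n = \<alpha> \<and> i mod n = l)"
    "(j = \<alpha>' * n + l') = (j div n = \<alpha>' \<and> j mod n = l')"
    using assms by (simp_all add: eq_mult_add_iff)
  ultimately show "mat_unit (m * n) (\<alpha> * n + l) (\<alpha>' * n + l') $$ (i,j) =
      kron (mat_unit m \<alpha> \<alpha>') (mat_unit n l l') $$ (i,j)"
    using i j unfolding kron_def mat_unit_def by auto
qed (auto simp: kron_def mat_unit_def)

lemma linear_functional_eq_on_kron:
  assumes f: "linear_functional (m * n) f" and g: "linear_functional (m * n) g"
    and fg: "\<forall>a\<in>carrier_mat m m. \<forall>b\<in>carrier_mat n n. f (kron a b) = g (kron a b)"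
    and X: "X \<in> carrier_mat (m * n) (m * n)"
  shows "f X = g X"
proof -
  have "f (mat_unit (m * n) P Q) = g (mat_unit (m * n) P Q)" if "P < m * n" "Q < m * n" for P Q
  proof -
    have "P div n < m" "Q div n < m" "P mod n < n" "Q mod n < n"
      using that less_mult_div_mod by blast+
    then show ?thesis
      using fg mat_unit_kron[of "P div n" m "Q div n" "P mod n" n "Q mod n"] by simp
  qed
  then show ?thesis unfolding linear_functional_expand[OF f X] linear_functional_expand[OF g X] by simp
qed

lemma vector_functional_kron:
  assumes "A \<in> carrier_mat m m" "B \<in> carrier_mat n n"
  shows "vector_functional (m * n) h (kron A B) = (\<Sum>\<alpha><m. \<Sum>l<n. \<Sum>\<alpha>'<m. \<Sum>l'<n.
     A $$ (\<alpha>,\<alpha>') * B $$ (l,l') * (cnj (h (\<alpha> * n + l)) * h (\<alpha>' * n + l')))"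
  unfolding vector_functional_def sum_lessThan_mult
  by (intro sum.cong refl) (simp add: kron_entry[OF assms] mult_ac)

lemma vector_functional_prod_vec_kron:
  assumes "a \<in> carrier_mat m m" "b \<in> carrier_mat n n"
  shows "vector_functional (m * n) (prod_vec n g y) (kron a b) = vector_functional m g a * vector_functional n y b"
proof -
  have "vector_functional (m * n) (prod_vec n g y) (kron a b) = (\<Sum>\<alpha><m. \<Sum>l<n. \<Sum>\<alpha>'<m. \<Sum>l'<n.
      (a $$ (\<alpha>,\<alpha>') * cnj (g \<alpha>) * g \<alpha>') * (b $$ (l,l') * cnj (y l) * y l'))"
    unfolding vector_functional_kron[OF assms] by (intro sum.cong refl) (simp add: prod_vec_def mult_ac)
  also have "\<dots> = vector_functional m g a * vector_functional n y b"
    unfolding vector_functional_def sum_product by simp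
  finally show ?thesis .
qed

lemma product_state_prod_vec:
  assumes nz: "vector_functional (m * n) (prod_vec n g y) (1\<^sub>m (m * n)) \<noteq> 0"
  shows "product_state m n (\<lambda>X. vector_functional (m * n) (prod_vec n g y) X /
                                 vector_functional (m * n) (prod_vec n g y) (1\<^sub>m (m * n)))"
proof -
  have w: "vector_functional (m * n) (prod_vec n g y) (1\<^sub>m (m * n)) =
      vector_functional m g (1\<^sub>m m) * vector_functional n y (1\<^sub>m n)"
    using vector_functional_prod_vec_kron[of "1\<^sub>m m" m "1\<^sub>m n" n g y] by (simp add: kron_one)
  then have "vector_functional m g (1\<^sub>m m) \<noteq> 0" "vector_functional n y (1\<^sub>m n) \<noteq> 0" using nz by auto
  then have "is_state m (\<lambda>A. vector_functional m g A / vector_functional m g (1\<^sub>m m))"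
    "is_state n (\<lambda>B. vector_functional n y B / vector_functional n y (1\<^sub>m n))"
    by (simp_all add: vector_functional_normalized_state)
  moreover have "vector_functional (m * n) (prod_vec n g y) (kron a b) / vector_functional (m * n) (prod_vec n g y) (1\<^sub>m (m * n))
      = vector_functional m g a / vector_functional m g (1\<^sub>m m) * (vector_functional n y b / vector_functional n y (1\<^sub>m n))"
    if "a \<in> carrier_mat m m" "b \<in> carrier_mat n n" for a b
    unfolding w vector_functional_prod_vec_kron[OF that] by simp
  ultimately show ?thesis
    unfolding product_state_def using vector_functional_normalized_state[OF nz] by blast
qed

lemma separable_if_finite_convex_comb:
  assumes fin: "finite I" and st: "is_state (m * n) \<omega>"
    and q: "\<forall>x\<in>I. 0 \<le> q x \<and> product_state m n (\<omega>s x)" and q1: "(\<Sum>x\<in>I. q x) = 1"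
    and eq: "\<forall>X\<in>carrier_mat (m * n) (m * n). \<omega> X = (\<Sum>x\<in>I. complex_of_real (q x) * \<omega>s x X)"
  shows "separable m n \<omega>"
proof -
  obtain f where f: "bij_betw f {..<card I} I"
    using ex_bij_betw_nat_finite[OF fin] lessThan_atLeast0 by metis
  then have "f i \<in> I" if "i < card I" for i using that unfolding bij_betw_def by auto
  moreover have "(\<Sum>i<card I. q (f i)) = 1" using sum.reindex_bij_betw[OF f, of q] q1 by simp
  moreover have "\<omega> X = (\<Sum>i<card I. complex_of_real (q (f i)) * \<omega>s (f i) X)"
    if "X \<in> carrier_mat (m * n) (m * n)" for X
    using eq that sum.reindex_bij_betw[OF f, of "\<lambda>x. complex_of_real (q x) * \<omega>s x X"] by simp
  ultimately show ?thesis
    unfolding separable_def using st q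
    by (intro conjI exI[of _ "card I"] exI[of _ "\<lambda>i. q (f i)"] exI[of _ "\<lambda>i. \<omega>s (f i)"]) auto
qed

text \<open>Normalising each summand gives the convex combination of product states.\<close>
lemma separable_if_sum_prod_vec:
  fixes g y :: "'i \<Rightarrow> nat \<Rightarrow> complex"
  assumes fin: "finite I"
    and eq: "\<forall>X\<in>carrier_mat (m * n) (m * n).
               \<omega> X = (\<Sum>x\<in>I. vector_functional (m * n) (prod_vec n (g x) (y x)) X)"
    and one: "\<omega> (1\<^sub>m (m * n)) = 1"
  shows "separable m n \<omega>"
proof -
  define h where "h x = prod_vec n (g x) (y x)" for x
  define w where "w x = vector_functional (m * n) (h x) (1\<^sub>m (m * n))" for x
  \<comment> \<open>summands with w x = 0 vanish identically and cannot be normalised\<close>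
  define I' where "I' = {x\<in>I. w x \<noteq> 0}"
  have finI': "finite I'" using fin unfolding I'_def by simp
  have eq': "\<omega> X = (\<Sum>x\<in>I'. vector_functional (m * n) (h x) X)" if X: "X \<in> carrier_mat (m * n) (m * n)" for X
  proof -
    have "\<omega> X = (\<Sum>x\<in>I. vector_functional (m * n) (h x) X)" using eq X unfolding h_def by simp
    also have "\<dots> = (\<Sum>x\<in>I'. vector_functional (m * n) (h x) X)"
      unfolding I'_def using fin by (intro sum.mono_neutral_right) (auto simp: w_def vector_functional_vanishes)
    finally show ?thesis .
  qed
  have one': "(\<Sum>x\<in>I'. w x) = 1" using eq' one unfolding w_def by simp
  have st: "is_state (m * n) \<omega>"
    by (rule is_state_cong[OF _ sum_vector_functionals_state[OF finI']]) (use eq' one' w_def in auto)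
  have wr: "w x = complex_of_real (Re (w x))" "0 \<le> Re (w x)" for x
    using vector_functional_one_nonneg unfolding w_def by (auto simp: complex_is_Real_iff complex_eq_iff)
  have "(\<Sum>x\<in>I'. Re (w x)) = 1" using one' by (metis one_complex.sel(1) Re_sum)
  moreover have "product_state m n (\<lambda>X. vector_functional (m * n) (h x) X / w x)" if "x \<in> I'" for x
    using that unfolding I'_def w_def h_def by (intro product_state_prod_vec) simp
  moreover have "vector_functional (m * n) (h x) X = complex_of_real (Re (w x)) * (vector_functional (m * n) (h x) X / w x)"
    if "x \<in> I'" for x X
    using that wr(1)[of x] unfolding I'_def by (metis (mono_tags, lifting) mem_Collect_eq nonzero_mult_div_cancel_left
      times_divide_eq_right)
  ultimately show ?thesis
    using eq' wr(2) by (intro separable_if_finite_convex_comb[OF finI' st]) auto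
qed

section \<open>The ampliation \<phi> \<otimes> id\<close>

text \<open>The m \<times> m block of X from which entry (i, j) of tensor_id \<phi> m n k X is computed.\<close>
definition tensor_block :: "nat \<Rightarrow> nat \<Rightarrow> complex mat \<Rightarrow> nat \<Rightarrow> nat \<Rightarrow> complex mat" where
  "tensor_block m k X i j = mat m m (\<lambda>(a,a'). X $$ (a * k + i mod k, a' * k + j mod k))"

lemma tensor_id_entry:
  "i < n * k \<Longrightarrow> j < n * k \<Longrightarrow>
    tensor_id \<phi> m n k X $$ (i,j) = \<phi> (tensor_block m k X i j) $$ (i div k, j div k)"
  unfolding tensor_id_def tensor_block_def by simp

lemma tensor_id_carrier [simp]: "tensor_id \<phi> m n k X \<in> carrier_mat (n * k) (n * k)"
  unfolding tensor_id_def by simp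

lemma tensor_id_dims [simp]:
  "dim_row (tensor_id \<phi> m n k X) = n * k" "dim_col (tensor_id \<phi> m n k X) = n * k"
  unfolding tensor_id_def by simp_all

lemma tensor_block_carrier [simp]: "tensor_block m k X i j \<in> carrier_mat m m"
  unfolding tensor_block_def by simp

lemma UCP_D:
  assumes "UCP m n \<phi>"
  shows "\<And>A. A \<in> carrier_mat m m \<Longrightarrow> \<phi> A \<in> carrier_mat n n"
    "\<And>A B. A \<in> carrier_mat m m \<Longrightarrow> B \<in> carrier_mat m m \<Longrightarrow> \<phi> (A + B) = \<phi> A + \<phi> B"
    "\<And>c A. A \<in> carrier_mat m m \<Longrightarrow> \<phi> (c \<cdot>\<^sub>m A) = c \<cdot>\<^sub>m \<phi> A"
    "\<phi> (1\<^sub>m m) = 1\<^sub>m n"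
    "\<And>k X. psd (m * k) X \<Longrightarrow> psd (n * k) (tensor_id \<phi> m n k X)"
  using assms unfolding UCP_def by blast+

lemma tensor_id_add:
  assumes U: "UCP m n \<phi>" and X: "X \<in> carrier_mat (m * k) (m * k)" and Y: "Y \<in> carrier_mat (m * k) (m * k)"
  shows "tensor_id \<phi> m n k (X + Y) = tensor_id \<phi> m n k X + tensor_id \<phi> m n k Y"
proof (rule eq_matI)
  fix i j assume "i < dim_row (tensor_id \<phi> m n k X + tensor_id \<phi> m n k Y)"
    "j < dim_col (tensor_id \<phi> m n k X + tensor_id \<phi> m n k Y)"
  then have i: "i < n * k" and j: "j < n * k" by auto
  then have "tensor_block m k (X + Y) i j = tensor_block m k X i j + tensor_block m k Y i j"
    unfolding tensor_block_def using X Y less_mult_div_mod[OF i] by (intro eq_matI) (auto simp: mult_add_less)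
  then show "tensor_id \<phi> m n k (X + Y) $$ (i,j) = (tensor_id \<phi> m n k X + tensor_id \<phi> m n k Y) $$ (i,j)"
    using i j less_mult_div_mod[OF i] less_mult_div_mod[OF j] UCP_D(2)[OF U]
      UCP_D(1)[OF U tensor_block_carrier, of k X i j] UCP_D(1)[OF U tensor_block_carrier, of k Y i j]
    by (simp add: tensor_id_entry mult.commute[of n k])
qed auto

lemma tensor_id_smult:
  assumes U: "UCP m n \<phi>" and X: "X \<in> carrier_mat (m * k) (m * k)"
  shows "tensor_id \<phi> m n k (c \<cdot>\<^sub>m X) = c \<cdot>\<^sub>m tensor_id \<phi> m n k X"
proof (rule eq_matI)
  fix i j assume "i < dim_row (c \<cdot>\<^sub>m tensor_id \<phi> m n k X)" "j < dim_col (c \<cdot>\<^sub>m tensor_id \<phi> m n k X)"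
  then have i: "i < n * k" and j: "j < n * k" by auto
  then have "tensor_block m k (c \<cdot>\<^sub>m X) i j = c \<cdot>\<^sub>m tensor_block m k X i j"
    unfolding tensor_block_def using X less_mult_div_mod[OF i] by (intro eq_matI) (auto simp: mult_add_less)
  then show "tensor_id \<phi> m n k (c \<cdot>\<^sub>m X) $$ (i,j) = (c \<cdot>\<^sub>m tensor_id \<phi> m n k X) $$ (i,j)"
    using i j less_mult_div_mod[OF i] less_mult_div_mod[OF j] UCP_D(3)[OF U]
      UCP_D(1)[OF U tensor_block_carrier, of k X i j]
    by (simp add: tensor_id_entry mult.commute[of n k])
qed auto

lemma tensor_id_kron:
  assumes U: "UCP m n \<phi>" and a: "a \<in> carrier_mat m m" and b: "b \<in> carrier_mat k k"
  shows "tensor_id \<phi> m n k (kron a b) = kron (\<phi> a) b"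
proof (rule eq_matI)
  have pa: "\<phi> a \<in> carrier_mat n n" using UCP_D(1)[OF U a] .
  fix i j assume "i < dim_row (kron (\<phi> a) b)" "j < dim_col (kron (\<phi> a) b)"
  then have i: "i < n * k" and j: "j < n * k" using pa b by (auto simp: kron_def)
  then have "tensor_block m k (kron a b) i j = b $$ (i mod k, j mod k) \<cdot>\<^sub>m a"
    unfolding tensor_block_def using a b less_mult_div_mod[OF i] less_mult_div_mod[OF j]
    by (intro eq_matI) (auto simp: kron_entry[OF a b] mult.commute)
  then show "tensor_id \<phi> m n k (kron a b) $$ (i,j) = kron (\<phi> a) b $$ (i,j)"
    using i j pa b less_mult_div_mod[OF i] less_mult_div_mod[OF j] UCP_D(3)[OF U a]
    by (simp add: tensor_id_entry kron_def mult.commute)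
next
  show "dim_row (tensor_id \<phi> m n k (kron a b)) = dim_row (kron (\<phi> a) b)"
    "dim_col (tensor_id \<phi> m n k (kron a b)) = dim_col (kron (\<phi> a) b)"
    using UCP_D(1)[OF U a] b by (auto simp: kron_def)
qed

lemma tensor_id_one:
  assumes "UCP m n \<phi>"
  shows "tensor_id \<phi> m n k (1\<^sub>m (m * k)) = 1\<^sub>m (n * k)"
  using tensor_id_kron[OF assms, of "1\<^sub>m m" "1\<^sub>m k"] UCP_D(4)[OF assms] by (simp add: kron_one)

lemma is_state_comp_tensor_id:
  assumes U: "UCP m n \<phi>" and st: "is_state (n * k) \<rho>"
  shows "is_state (m * k) (\<rho> \<circ> tensor_id \<phi> m n k)"
  using st UCP_D(5)[OF U] unfolding is_state_def
  by (simp add: tensor_id_add[OF U] tensor_id_smult[OF U] tensor_id_one[OF U])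

lemma vinner_mult_vec:
  assumes xi: "\<xi> \<in> carrier_vec d" and Y: "Y \<in> carrier_mat d d"
  shows "vinner (Y *\<^sub>v \<xi>) \<xi> = vector_functional d (($) \<xi>) Y"
proof -
  have "vinner (Y *\<^sub>v \<xi>) \<xi> = (\<Sum>p<d. (\<Sum>q<d. Y $$ (p,q) * \<xi> $ q) * cnj (\<xi> $ p))"
    unfolding vinner_def using xi Y
    by (intro sum.cong) (auto simp: scalar_prod_def lessThan_atLeast0 mult.commute)
  then show ?thesis
    unfolding vector_functional_def sum_distrib_right by (simp add: mult_ac)
qed

lemma vstate_eq_comp:
  assumes "\<xi> \<in> carrier_vec (n * n)"
  shows "vstate \<phi> m n \<xi> = vector_functional (n * n) (($) \<xi>) \<circ> tensor_id \<phi> m n n"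
  unfolding vstate_def using vinner_mult_vec[OF assms tensor_id_carrier] by (simp add: fun_eq_iff)

lemma unit_vector_state:
  assumes "unit_vec_c d \<xi>"
  shows "is_state d (vector_functional d (($) \<xi>))"
proof -
  have xi: "\<xi> \<in> carrier_vec d" and one: "vinner \<xi> \<xi> = 1" using assms unfolding unit_vec_c_def by auto
  have "vector_functional d (($) \<xi>) (1\<^sub>m d) = 1"
    using vinner_mult_vec[OF xi, of "1\<^sub>m d"] xi one by simp
  then show ?thesis using sum_vector_functionals_state[of "{()}" d "\<lambda>_. ($) \<xi>"] by simp
qed

lemma is_state_vstate:
  assumes "UCP m n \<phi>" "unit_vec_c (n * n) \<xi>"
  shows "is_state (m * n) (vstate \<phi> m n \<xi>)"
  using is_state_comp_tensor_id[OF assms(1) unit_vector_state[OF assms(2)]] assms(2)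
  by (simp add: vstate_eq_comp unit_vec_c_def)

section \<open>Marginally cyclic vectors\<close>

text \<open>The coefficient matrix C of \<xi> = \<Sum> C_{jl} e_j \<otimes> e_l.\<close>
definition coeff_mat :: "nat \<Rightarrow> complex vec \<Rightarrow> complex mat" where
  "coeff_mat n \<xi> = mat n n (\<lambda>(j,l). \<xi> $ (j * n + l))"

lemma kron_one_left_mult_vec:
  assumes b: "b \<in> carrier_mat n n" and xi: "\<xi> \<in> carrier_vec (n * n)" and j: "j < n" and l: "l < n"
  shows "(kron (1\<^sub>m n) b *\<^sub>v \<xi>) $ (j * n + l) = (\<Sum>l'<n. b $$ (l,l') * \<xi> $ (j * n + l'))"
proof -
  have "(kron (1\<^sub>m n) b *\<^sub>v \<xi>) $ (j * n + l) = (\<Sum>Q<n * n. kron (1\<^sub>m n) b $$ (j * n + l, Q) * \<xi> $ Q)"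
    using mult_add_less[OF j l] xi b by (simp add: scalar_prod_def lessThan_atLeast0 kron_def)
  also have "\<dots> = (\<Sum>j'<n. \<Sum>l'<n. (if j = j' then 1 else 0) * b $$ (l,l') * \<xi> $ (j' * n + l'))"
    unfolding sum_lessThan_mult using j l b by (intro sum.cong refl) (simp add: kron_entry[OF one_carrier_mat b])
  also have "\<dots> = (\<Sum>l'<n. b $$ (l,l') * \<xi> $ (j * n + l'))"
    using j by (simp add: if_zero_distrib sum.delta sum_if_const)
  finally show ?thesis .
qed

lemma marginally_cyclic_coeff_mat_invertible:
  assumes mc: "marginally_cyclic n \<xi>"
  obtains G where "G \<in> carrier_mat n n" "coeff_mat n \<xi> * G = 1\<^sub>m n"
proof -
  define C where "C = coeff_mat n \<xi>"
  have xi: "\<xi> \<in> carrier_vec (n * n)" using mc unfolding marginally_cyclic_def by simp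
  have Cc: "C \<in> carrier_mat n n" unfolding C_def coeff_mat_def by simp
  have "det C \<noteq> 0"
  proof
    assume "det C = 0"
    then obtain v where v: "v \<in> carrier_vec n" "v \<noteq> 0\<^sub>v n" "C *\<^sub>v v = 0\<^sub>v n"
      using det_0_iff_vec_prod_zero[OF Cc] by blast
    \<comment> \<open>1 \<otimes> b annihilates \<xi> for the matrix b whose only nonzero row is v\<close>
    define b where "b = mat n n (\<lambda>(l,l'). if l = 0 then v $ l' else 0)"
    have bc: "b \<in> carrier_mat n n" unfolding b_def by simp
    have "kron (1\<^sub>m n) b *\<^sub>v \<xi> = 0\<^sub>v (n * n)"
    proof (rule eq_vecI)
      fix P assume "P < dim_vec (0\<^sub>v (n * n) :: complex vec)"
      then have P: "P < n * n" by simp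
      have j: "P div n < n" and l: "P mod n < n" using less_mult_div_mod[OF P] .
      have "(kron (1\<^sub>m n) b *\<^sub>v \<xi>) $ P = (\<Sum>l'<n. b $$ (P mod n, l') * \<xi> $ (P div n * n + l'))"
        using kron_one_left_mult_vec[OF bc xi j l] by simp
      also have "\<dots> = (if P mod n = 0 then (C *\<^sub>v v) $ (P div n) else 0)"
        using j l v(1) by (auto simp: b_def C_def coeff_mat_def scalar_prod_def lessThan_atLeast0 mult.commute
          intro!: sum.cong)
      finally show "(kron (1\<^sub>m n) b *\<^sub>v \<xi>) $ P = 0\<^sub>v (n * n) $ P" using P v(3) j by simp
    qed (use bc in \<open>simp add: kron_def\<close>)
    then have "b = 0\<^sub>m n n" using mc bc unfolding marginally_cyclic_def by blast
    moreover have "b $$ (0,i) = v $ i" if "i < n" for i using that unfolding b_def by simp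
    ultimately have "v $ i = 0\<^sub>v n $ i" if "i < n" for i using that by simp
    then have "v = 0\<^sub>v n" using v(1) by (intro eq_vecI) auto
    then show False using v(2) by simp
  qed
  then have "C \<in> Units (ring_mat TYPE(complex) n ())" by (rule det_non_zero_imp_unit[OF Cc])
  then show ?thesis using that unfolding Units_def ring_mat_def C_def by auto
qed

text \<open>The maximally entangled vector n^(-1/2) \<Sum> e_j \<otimes> e_j.\<close>
lemma marginally_cyclic_unit_vec_exists:
  assumes n: "n > 0"
  obtains \<xi> where "unit_vec_c (n * n) \<xi>" "marginally_cyclic n \<xi>"
proof -
  define c where "c = complex_of_real (1 / sqrt (real n))"
  define \<xi> where "\<xi> = vec (n * n) (\<lambda>P. if P div n = P mod n then c else 0)"
  have xi: "\<xi> \<in> carrier_vec (n * n)" unfolding \<xi>_def by simp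
  have ent: "\<xi> $ (j * n + l) = (if j = l then c else 0)" if "j < n" "l < n" for j l
    using that mult_add_less[OF that] unfolding \<xi>_def by simp
  have cc: "c * cnj c = complex_of_real (1 / real n)"
    unfolding c_def using n by (simp flip: of_real_mult)
  have "vinner \<xi> \<xi> = (\<Sum>P<n * n. \<xi> $ P * cnj (\<xi> $ P))" unfolding vinner_def using xi by simp
  also have "\<dots> = (\<Sum>j<n. \<Sum>l<n. if j = l then c * cnj c else 0)"
    unfolding sum_lessThan_mult by (intro sum.cong refl) (simp add: ent)
  also have "\<dots> = of_nat n * complex_of_real (1 / real n)" by (simp add: cc)
  also have "\<dots> = complex_of_real (real n * (1 / real n))" by simp
  also have "\<dots> = 1" using n by simp
  finally have u: "unit_vec_c (n * n) \<xi>" unfolding unit_vec_c_def using xi by simp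
  have c0: "c \<noteq> 0" unfolding c_def using n by simp
  have "marginally_cyclic n \<xi>"
    unfolding marginally_cyclic_def
  proof (intro conjI ballI impI)
    fix b assume bc: "b \<in> carrier_mat n n" and z: "kron (1\<^sub>m n) b *\<^sub>v \<xi> = 0\<^sub>v (n * n)"
    show "b = 0\<^sub>m n n"
    proof (rule eq_matI)
      fix l j assume "l < dim_row (0\<^sub>m n n :: complex mat)" "j < dim_col (0\<^sub>m n n :: complex mat)"
      then have l: "l < n" and j: "j < n" by auto
      have "(kron (1\<^sub>m n) b *\<^sub>v \<xi>) $ (j * n + l) = b $$ (l,j) * c"
        unfolding kron_one_left_mult_vec[OF bc xi j l] using j by (simp add: ent if_zero_distrib sum.delta)
      then show "b $$ (l,j) = 0\<^sub>m n n $$ (l,j)" using z mult_add_less[OF j l] c0 l j by simp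
    qed (use bc in auto)
  qed (rule xi)
  with u show ?thesis using that by blast
qed

section \<open>Holevo form\<close>

lemma sum4_reorder:
  "(\<Sum>a\<in>A. \<Sum>b\<in>B. \<Sum>c\<in>C. \<Sum>d\<in>D. f a b c d) = (\<Sum>b\<in>B. \<Sum>d\<in>D. \<Sum>a\<in>A. \<Sum>c\<in>C. f a b c d)"
proof -
  have "(\<Sum>a\<in>A. \<Sum>b\<in>B. \<Sum>c\<in>C. \<Sum>d\<in>D. f a b c d) = (\<Sum>b\<in>B. \<Sum>a\<in>A. \<Sum>c\<in>C. \<Sum>d\<in>D. f a b c d)"
    by (rule sum.swap)
  also have "\<dots> = (\<Sum>b\<in>B. \<Sum>a\<in>A. \<Sum>d\<in>D. \<Sum>c\<in>C. f a b c d)"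
    by (intro sum.cong refl sum.swap)
  also have "\<dots> = (\<Sum>b\<in>B. \<Sum>d\<in>D. \<Sum>a\<in>A. \<Sum>c\<in>C. f a b c d)"
    by (intro sum.cong refl sum.swap)
  finally show ?thesis .
qed

lemma vector_functional_outer:
  "vector_functional n u (mat n n (\<lambda>(l,l'). cnj (x l) * y l')) =
     cnj (\<Sum>l<n. u l * x l) * (\<Sum>l<n. u l * y l)"
  unfolding vector_functional_def cnj_sum sum_product by (intro sum.cong refl) (simp add: mult_ac)

lemma vector_functional_kron_gram:
  assumes A: "A \<in> carrier_mat n n" and b: "b \<in> carrier_mat n n"
    and entries: "\<forall>j<n. \<forall>j'<n. A $$ (j,j') = (\<Sum>x\<in>X. c x * (cnj (z x j) * z x j'))"
  shows "vector_functional (n * n) h (kron A b) =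
           (\<Sum>x\<in>X. c x * vector_functional n (\<lambda>l. \<Sum>j<n. z x j * h (j * n + l)) b)"
proof -
  define F where "F x j l j' l' = b $$ (l,l') * (cnj (z x j) * cnj (h (j * n + l))) * (z x j' * h (j' * n + l'))"
    for x j l j' l'
  have "vector_functional (n * n) h (kron A b) = (\<Sum>j<n. \<Sum>l<n. \<Sum>j'<n. \<Sum>l'<n. \<Sum>x\<in>X. c x * F x j l j' l')"
    unfolding vector_functional_kron[OF A b] F_def
    by (intro sum.cong refl) (simp add: entries sum_distrib_left mult_ac)
  also have "\<dots> = (\<Sum>x\<in>X. \<Sum>j<n. \<Sum>l<n. \<Sum>j'<n. \<Sum>l'<n. c x * F x j l j' l')"
    by (simp only: sum.swap[where B = X])
  also have "\<dots> = (\<Sum>x\<in>X. c x * vector_functional n (\<lambda>l. \<Sum>j<n. z x j * h (j * n + l)) b)"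
  proof (intro sum.cong refl)
    fix x
    have outer: "cnj (\<Sum>j<n. z x j * h (j * n + l)) * (\<Sum>j'<n. z x j' * h (j' * n + l')) =
        (\<Sum>j<n. \<Sum>j'<n. (cnj (z x j) * cnj (h (j * n + l))) * (z x j' * h (j' * n + l')))" for l l'
      unfolding cnj_sum sum_product by simp
    have "vector_functional n (\<lambda>l. \<Sum>j<n. z x j * h (j * n + l)) b =
        (\<Sum>l<n. \<Sum>l'<n. b $$ (l,l') * (cnj (\<Sum>j<n. z x j * h (j * n + l)) * (\<Sum>j'<n. z x j' * h (j' * n + l'))))"
      unfolding vector_functional_def by (simp only: mult.assoc)
    also have "\<dots> = (\<Sum>l<n. \<Sum>l'<n. \<Sum>j<n. \<Sum>j'<n. F x j l j' l')"
      unfolding outer unfolding F_def sum_distrib_left by (simp only: mult.assoc)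
    finally have "vector_functional n (\<lambda>l. \<Sum>j<n. z x j * h (j * n + l)) b =
        (\<Sum>l<n. \<Sum>l'<n. \<Sum>j<n. \<Sum>j'<n. F x j l j' l')" .
    then show "(\<Sum>j<n. \<Sum>l<n. \<Sum>j'<n. \<Sum>l'<n. c x * F x j l j' l') =
        c x * vector_functional n (\<lambda>l. \<Sum>j<n. z x j * h (j * n + l)) b"
      by (subst sum4_reorder) (simp add: sum_distrib_left)
  qed
  finally show ?thesis .
qed

text \<open>Holevo form \<phi>(a) = \<Sum>_i p_i \<sigma>_i(a) T_i with states \<sigma>_i and positive matrices
  T_i = \<Sum>_r z_ir z_ir^* (up to complex conjugation of the entries).\<close>
definition holevo_form :: "nat \<Rightarrow> nat \<Rightarrow> (complex mat \<Rightarrow> complex mat) \<Rightarrow> bool" where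
  "holevo_form m n \<phi> \<longleftrightarrow> (\<exists>k (p :: nat \<Rightarrow> real) \<sigma> z. (\<forall>i<k. 0 \<le> p i \<and> is_state m (\<sigma> i)) \<and>
     (\<forall>a\<in>carrier_mat m m. \<forall>j<n. \<forall>j'<n.
        \<phi> a $$ (j,j') = (\<Sum>i<k. complex_of_real (p i) * \<sigma> i a * (\<Sum>r<n. cnj (z i r j) * z i r j'))))"

text \<open>Testing the vector state of \<xi> against a \<otimes> b, with b built from the inverse of the
  coefficient matrix of \<xi>, reads off a single entry of \<phi>(a).\<close>
lemma vstate_kron_coeff_inverse:
  assumes U: "UCP m n \<phi>" and xi: "\<xi> \<in> carrier_vec (n * n)"
    and G: "G \<in> carrier_mat n n" and CG: "coeff_mat n \<xi> * G = 1\<^sub>m n"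
    and a: "a \<in> carrier_mat m m" and j0: "j0 < n" and j0': "j0' < n"
  shows "vstate \<phi> m n \<xi> (kron a (mat n n (\<lambda>(l,l'). cnj (G $$ (l,j0)) * G $$ (l',j0')))) = \<phi> a $$ (j0,j0')"
proof -
  define b where "b = mat n n (\<lambda>(l,l'). cnj (G $$ (l,j0)) * G $$ (l',j0'))"
  have bc: "b \<in> carrier_mat n n" by (simp add: b_def)
  have pa: "\<phi> a \<in> carrier_mat n n" using UCP_D(1)[OF U a] .
  have inverse: "(\<Sum>l<n. \<xi> $ (j * n + l) * G $$ (l,j')) = (if j = j' then 1 else 0)" if "j < n" "j' < n" for j j'
  proof -
    have "(coeff_mat n \<xi> * G) $$ (j,j') = (\<Sum>l<n. \<xi> $ (j * n + l) * G $$ (l,j'))"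
      using that G unfolding coeff_mat_def by (simp add: scalar_prod_def lessThan_atLeast0)
    then show ?thesis using CG that by simp
  qed
  have "vstate \<phi> m n \<xi> (kron a b) = (\<Sum>j<n. \<Sum>l<n. \<Sum>j'<n. \<Sum>l'<n.
        \<phi> a $$ (j,j') * b $$ (l,l') * (cnj (\<xi> $ (j * n + l)) * \<xi> $ (j' * n + l')))"
    unfolding vstate_eq_comp[OF xi] o_apply tensor_id_kron[OF U a bc] vector_functional_kron[OF pa bc] ..
  also have "\<dots> = (\<Sum>j<n. \<Sum>j'<n. \<Sum>l<n. \<Sum>l'<n.
        \<phi> a $$ (j,j') * (cnj (\<xi> $ (j * n + l) * G $$ (l,j0)) * (\<xi> $ (j' * n + l') * G $$ (l',j0'))))"
    by (rule sum.cong[OF refl], rule trans[OF sum.swap], intro sum.cong refl) (simp add: b_def mult_ac)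
  also have "\<dots> = (\<Sum>j<n. \<Sum>j'<n. \<phi> a $$ (j,j') * (cnj (\<Sum>l<n. \<xi> $ (j * n + l) * G $$ (l,j0)) *
        (\<Sum>l'<n. \<xi> $ (j' * n + l') * G $$ (l',j0'))))"
    unfolding cnj_sum sum_product unfolding sum_distrib_left ..
  also have "\<dots> = \<phi> a $$ (j0,j0')"
    using j0 j0' by (simp add: inverse if_zero_distrib sum.delta sum_if_const)
  finally show ?thesis unfolding b_def .
qed

lemma separable_vstate_holevo_form:
  assumes U: "UCP m n \<phi>" and mc: "marginally_cyclic n \<xi>"
    and sep: "separable m n (vstate \<phi> m n \<xi>)"
  shows "holevo_form m n \<phi>"
proof -
  have xi: "\<xi> \<in> carrier_vec (n * n)" using mc unfolding marginally_cyclic_def by simp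
  obtain G where G: "G \<in> carrier_mat n n" "coeff_mat n \<xi> * G = 1\<^sub>m n"
    using marginally_cyclic_coeff_mat_invertible[OF mc] by blast
  obtain k :: nat and p :: "nat \<Rightarrow> real" and \<omega>s :: "nat \<Rightarrow> complex mat \<Rightarrow> complex" where pp: "\<forall>i<k. 0 \<le> p i \<and> product_state m n (\<omega>s i)"
    and decomp: "\<forall>X\<in>carrier_mat (m * n) (m * n). vstate \<phi> m n \<xi> X = (\<Sum>i<k. complex_of_real (p i) * \<omega>s i X)"
    using sep unfolding separable_def by (elim conjE exE) blast
  obtain \<sigma> \<tau> where st: "\<forall>i<k. is_state m (\<sigma> i) \<and> is_state n (\<tau> i) \<and>
      (\<forall>a\<in>carrier_mat m m. \<forall>b\<in>carrier_mat n n. \<omega>s i (kron a b) = \<sigma> i a * \<tau> i b)"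
    using pp unfolding product_state_def by metis
  have "\<exists>u. \<forall>B\<in>carrier_mat n n. \<tau> i B = (\<Sum>r<n. vector_functional n (u r) B)" if "i < k" for i
    using state_sum_vector_functionals st that by metis
  then obtain u where u: "\<forall>i<k. \<forall>B\<in>carrier_mat n n. \<tau> i B = (\<Sum>r<n. vector_functional n (u i r) B)"
    by metis
  define z where "z i r j = (\<Sum>l<n. u i r l * G $$ (l,j))" for i r j
  have "\<phi> a $$ (j,j') = (\<Sum>i<k. complex_of_real (p i) * \<sigma> i a * (\<Sum>r<n. cnj (z i r j) * z i r j'))"
    if a: "a \<in> carrier_mat m m" and j: "j < n" and j': "j' < n" for a j j'
  proof -
    define b where "b = mat n n (\<lambda>(l,l'). cnj (G $$ (l,j)) * G $$ (l',j'))"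
    have bc: "b \<in> carrier_mat n n" by (simp add: b_def)
    have "\<phi> a $$ (j,j') = vstate \<phi> m n \<xi> (kron a b)"
      unfolding b_def using vstate_kron_coeff_inverse[OF U xi G a j j'] ..
    also have "\<dots> = (\<Sum>i<k. complex_of_real (p i) * (\<sigma> i a * \<tau> i b))"
      using decomp st a bc by simp
    also have "\<dots> = (\<Sum>i<k. complex_of_real (p i) * \<sigma> i a * (\<Sum>r<n. cnj (z i r j) * z i r j'))"
    proof (intro sum.cong refl)
      fix i assume "i \<in> {..<k}"
      then have "\<tau> i b = (\<Sum>r<n. cnj (z i r j) * z i r j')"
        using u bc unfolding b_def z_def by (simp add: vector_functional_outer)
      then show "complex_of_real (p i) * (\<sigma> i a * \<tau> i b) =
          complex_of_real (p i) * \<sigma> i a * (\<Sum>r<n. cnj (z i r j) * z i r j')" by simp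
    qed
    finally show ?thesis .
  qed
  then show ?thesis
    unfolding holevo_form_def using pp st by blast
qed

lemma linear_functional_sum:
  "(\<And>x. x \<in> I \<Longrightarrow> linear_functional d (f x)) \<Longrightarrow> linear_functional d (\<lambda>X. \<Sum>x\<in>I. f x X)"
  unfolding linear_functional_def by (simp add: sum.distrib sum_distrib_left)

lemma vector_functional_scale:
  "vector_functional d (\<lambda>q. c * g q) A = cnj c * c * vector_functional d g A"
  unfolding vector_functional_def sum_distrib_left by (intro sum.cong refl) (simp add: mult_ac)

text \<open>Decomposing the states \<sigma>_i into vector functionals and absorbing p_i into them.\<close>
lemma holevo_form_vector_functionals:
  assumes "holevo_form m n \<phi>"
  obtains X :: "(nat \<times> nat \<times> nat) set" and g Z where "finite X"
    "\<forall>a\<in>carrier_mat m m. \<forall>j<n. \<forall>j'<n.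
        \<phi> a $$ (j,j') = (\<Sum>x\<in>X. vector_functional m (g x) a * (cnj (Z x j) * Z x j'))"
proof -
  obtain k :: nat and p :: "nat \<Rightarrow> real" and \<sigma> :: "nat \<Rightarrow> complex mat \<Rightarrow> complex"
    and z :: "nat \<Rightarrow> nat \<Rightarrow> nat \<Rightarrow> complex"
    where p\<sigma>: "\<forall>i<k. 0 \<le> p i \<and> is_state m (\<sigma> i)"
    and entries: "\<forall>a\<in>carrier_mat m m. \<forall>j<n. \<forall>j'<n.
        \<phi> a $$ (j,j') = (\<Sum>i<k. complex_of_real (p i) * \<sigma> i a * (\<Sum>r<n. cnj (z i r j) * z i r j'))"
    using assms unfolding holevo_form_def by (elim exE conjE) blast
  have "\<exists>g. \<forall>A\<in>carrier_mat m m. \<sigma> i A = (\<Sum>t<m. vector_functional m (g t) A)" if "i < k" for i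
    using state_sum_vector_functionals p\<sigma> that by metis
  then obtain gs where gs: "\<forall>i<k. \<forall>A\<in>carrier_mat m m. \<sigma> i A = (\<Sum>t<m. vector_functional m (gs i t) A)"
    by metis
  define gp where "gp i t = (\<lambda>\<alpha>. complex_of_real (sqrt (p i)) * gs i t \<alpha>)" for i t
  define g where "g = (\<lambda>(i::nat, r::nat, t::nat). gp i t)"
  define Z where "Z = (\<lambda>(i::nat, r::nat, t::nat). z i r)"
  have "\<phi> a $$ (j,j') = (\<Sum>x\<in>{..<k} \<times> {..<n} \<times> {..<m}. vector_functional m (g x) a * (cnj (Z x j) * Z x j'))"
    if a: "a \<in> carrier_mat m m" and "j < n" "j' < n" for a j j'
  proof -
    have weight: "complex_of_real (p i) * \<sigma> i a = (\<Sum>t<m. vector_functional m (gp i t) a)"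
      if "i < k" for i
      using that gs p\<sigma> a unfolding gp_def
      by (simp add: vector_functional_scale sum_distrib_left mult_ac flip: of_real_mult)
    have "\<phi> a $$ (j,j') = (\<Sum>i<k. \<Sum>r<n. complex_of_real (p i) * \<sigma> i a * (cnj (z i r j) * z i r j'))"
      using entries a \<open>j < n\<close> \<open>j' < n\<close> by (simp add: sum_distrib_left)
    also have "\<dots> = (\<Sum>i<k. \<Sum>r<n. \<Sum>t<m. vector_functional m (gp i t) a * (cnj (z i r j) * z i r j'))"
      by (intro sum.cong refl) (simp add: weight sum_distrib_right)
    finally show ?thesis unfolding sum.cartesian_product' g_def Z_def by simp
  qed
  then show ?thesis by (intro that[of "{..<k} \<times> {..<n} \<times> {..<m}" g Z]) auto
qed

text \<open>Composing \<phi> \<otimes> id in Holevo form with a state \<rho> gives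
  a \<otimes> b \<mapsto> \<Sum> p_i \<sigma>_i(a) \<rho>(T_i \<otimes> b), and decomposing \<rho> into vector functionals
  exhibits this as a sum of vector functionals of elementary tensors.\<close>
lemma holevo_form_entanglement_breaking:
  assumes U: "UCP m n \<phi>" and H: "holevo_form m n \<phi>"
  shows "entanglement_breaking m n \<phi>"
  unfolding entanglement_breaking_def
proof (intro allI impI)
  fix \<rho> assume st: "is_state (n * n) \<rho>"
  obtain X :: "(nat \<times> nat \<times> nat) set" and g Z where finX: "finite X" and entries: "\<forall>a\<in>carrier_mat m m. \<forall>j<n. \<forall>j'<n.
      \<phi> a $$ (j,j') = (\<Sum>x\<in>X. vector_functional m (g x) a * (cnj (Z x j) * Z x j'))"
    by (rule holevo_form_vector_functionals[OF H])
  obtain vs where vs: "\<forall>Y\<in>carrier_mat (n * n) (n * n). \<rho> Y = (\<Sum>s<n * n. vector_functional (n * n) (vs s) Y)"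
    using state_sum_vector_functionals[OF st] by blast
  define I where "I = {..<n * n} \<times> X"
  define h where "h = (\<lambda>(s, x) l. \<Sum>j<n. Z x j * vs s (j * n + l))"
  have on_kron: "(\<rho> \<circ> tensor_id \<phi> m n n) (kron a b) =
      (\<Sum>u\<in>I. vector_functional (m * n) (prod_vec n (g (snd u)) (h u)) (kron a b))"
    if a: "a \<in> carrier_mat m m" and b: "b \<in> carrier_mat n n" for a b
  proof -
    have pa: "\<phi> a \<in> carrier_mat n n" using UCP_D(1)[OF U a] .
    have "(\<rho> \<circ> tensor_id \<phi> m n n) (kron a b) = (\<Sum>s<n * n. vector_functional (n * n) (vs s) (kron (\<phi> a) b))"
      using tensor_id_kron[OF U a b] vs pa b by simp
    also have "\<dots> = (\<Sum>s<n * n. \<Sum>x\<in>X. vector_functional m (g x) a * vector_functional n (h (s, x)) b)"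
      unfolding vector_functional_kron_gram[OF pa b bspec[OF entries a]] h_def by simp
    also have "\<dots> = (\<Sum>u\<in>I. vector_functional (m * n) (prod_vec n (g (snd u)) (h u)) (kron a b))"
      unfolding I_def sum.cartesian_product' vector_functional_prod_vec_kron[OF a b] by simp
    finally show ?thesis .
  qed
  have lin: "linear_functional (m * n) (\<lambda>Y. \<Sum>u\<in>I. vector_functional (m * n) (prod_vec n (g (snd u)) (h u)) Y)"
    by (intro linear_functional_sum vector_functional_linear)
  have "(\<rho> \<circ> tensor_id \<phi> m n n) Y = (\<Sum>u\<in>I. vector_functional (m * n) (prod_vec n (g (snd u)) (h u)) Y)"
    if "Y \<in> carrier_mat (m * n) (m * n)" for Y
    using linear_functional_eq_on_kron[OF is_state_linear_functional[OF is_state_comp_tensor_id[OF U st]] lin]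
      on_kron that by blast
  moreover have "(\<rho> \<circ> tensor_id \<phi> m n n) (1\<^sub>m (m * n)) = 1"
    using is_state_comp_tensor_id[OF U st] unfolding is_state_def by blast
  moreover have "finite I" unfolding I_def using finX by simp
  ultimately show "separable m n (\<rho> \<circ> tensor_id \<phi> m n n)"
    by (intro separable_if_sum_prod_vec[where I = I and g = "\<lambda>u. g (snd u)" and y = h]) auto
qed

section \<open>The dichotomy\<close>

lemma not_is_state_0: "\<not> is_state 0 \<rho>"
proof
  assume st: "is_state 0 \<rho>"
  have "1\<^sub>m 0 + 1\<^sub>m 0 = (1\<^sub>m 0 :: complex mat)" by (rule eq_matI) auto
  then have "\<rho> (1\<^sub>m 0) = \<rho> (1\<^sub>m 0) + \<rho> (1\<^sub>m 0)" using st unfolding is_state_def by (metis one_carrier_mat)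
  then show False using st unfolding is_state_def by simp
qed

lemma S_phi_nonempty:
  assumes "0 < n"
  shows "S_phi \<phi> m n \<noteq> {}"
  using marginally_cyclic_unit_vec_exists[OF assms] unfolding S_phi_def by blast

lemma entanglement_breaking_if_separable_member:
  assumes U: "UCP m n \<phi>" and \<rho>: "\<rho> \<in> S_phi \<phi> m n" and sep: "\<not> entangled m n \<rho>"
  shows "entanglement_breaking m n \<phi>"
proof -
  obtain \<xi> where u: "unit_vec_c (n * n) \<xi>" and mc: "marginally_cyclic n \<xi>" and \<rho>\<xi>: "\<rho> = vstate \<phi> m n \<xi>"
    using \<rho> unfolding S_phi_def by blast
  have "separable m n (vstate \<phi> m n \<xi>)"
    using sep is_state_vstate[OF U u] unfolding \<rho>\<xi> entangled_def by blast
  then show ?thesis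
    by (intro holevo_form_entanglement_breaking[OF U] separable_vstate_holevo_form[OF U mc])
qed

lemma S_phi_separable_if_entanglement_breaking:
  assumes "entanglement_breaking m n \<phi>" and "\<rho> \<in> S_phi \<phi> m n"
  shows "\<not> entangled m n \<rho>"
proof -
  obtain \<xi> where u: "unit_vec_c (n * n) \<xi>" and \<rho>\<xi>: "\<rho> = vstate \<phi> m n \<xi>"
    using assms(2) unfolding S_phi_def by blast
  then have "\<rho> = vector_functional (n * n) (($) \<xi>) \<circ> tensor_id \<phi> m n n"
    by (simp add: vstate_eq_comp unit_vec_c_def)
  then show ?thesis
    using assms(1) unit_vector_state[OF u] unfolding entanglement_breaking_def entangled_def by simp
qed

theorem corollary2p3:
  fixes m n :: nat and \<phi> :: "complex mat \<Rightarrow> complex mat"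
  assumes "UCP m n \<phi>"
  shows "((\<exists>\<rho> \<in> S_phi \<phi> m n. entangled m n \<rho>) \<longrightarrow>
           (\<forall>\<rho> \<in> S_phi \<phi> m n. entangled m n \<rho>) \<and> preserves_entanglement m n \<phi>) \<and>
         (\<not> (\<exists>\<rho> \<in> S_phi \<phi> m n. entangled m n \<rho>) \<longrightarrow> entanglement_breaking m n \<phi>)"
proof (intro conjI impI)
  assume "\<exists>\<rho> \<in> S_phi \<phi> m n. entangled m n \<rho>"
  then have "\<not> entanglement_breaking m n \<phi>"
    using S_phi_separable_if_entanglement_breaking by blast
  then show all: "\<forall>\<rho> \<in> S_phi \<phi> m n. entangled m n \<rho>"
    using entanglement_breaking_if_separable_member[OF assms] by blast
  then show "preserves_entanglement m n \<phi>"
    unfolding preserves_entanglement_def S_phi_def by blast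
next
  assume none: "\<not> (\<exists>\<rho> \<in> S_phi \<phi> m n. entangled m n \<rho>)"
  show "entanglement_breaking m n \<phi>"
  proof (cases "n = 0")
    case True
    then show ?thesis unfolding entanglement_breaking_def using not_is_state_0 by simp
  next
    case False
    then show ?thesis
      using S_phi_nonempty none entanglement_breaking_if_separable_member[OF assms] by blast
  qed
qed

end
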